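(* Let $\mathfrak{k}_1\subset\mathbb{C}^{N_1\times N_1}$ and $\mathfrak{k}_2\subset\mathbb{C}^{N_2\times N_2}$ be the (real) Lie algebras of Lie subgroups $K_1,K_2$ of matrices, and let $\mathfrak{t}_1,\mathfrak{t}_2$ be torus algebras of $\mathfrak{k}_1$ and $\mathfrak{k}_2$, respectively. Then $\mathfrak{t}_1\widehat{\oplus}\mathfrak{t}_2$ is a torus algebra of $\mathfrak{k}_1\widehat{\oplus}\mathfrak{k}_2$. If moreover $\mathfrak{k}_1\subset sl_{\mathbb{C}}(N_1)$ and $\mathfrak{k}_2\subset sl_{\mathbb{C}}(N_2)$, then the converse holds: if $\mathfrak{t}_1\subset\mathfrak{k}_1$ and $\mathfrak{t}_2\subset\mathfrak{k}_2$ are Lie subalgebras such that $\mathfrak{t}_1\widehat{\oplus}\mathfrak{t}_2$ is a torus algebra of $\mathfrak{k}_1\widehat{\oplus}\mathfrak{k}_2$, then $\mathfrak{t}_1$ and $\mathfrak{t}_2$ are torus algebras of $\mathfrak{k}_1$ and $\mathfrak{k}_2$.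
   Context: A torus algebra of a Lie algebra is a maximal Abelian subalgebra. For subspaces $\mathfrak{a}_1\subset\mathbb{C}^{N_1\times N_1}$, $\mathfrak{a}_2\subset\mathbb{C}^{N_2\times N_2}$, $\mathfrak{a}_1\widehat{\oplus}\mathfrak{a}_2=\{\Omega_1\otimes I_{N_2}+I_{N_1}\otimes\Omega_2\mid \Omega_1\in\mathfrak{a}_1,\Omega_2\in\mathfrak{a}_2\}$; $\mathfrak{k}_1\widehat{\oplus}\mathfrak{k}_2$ is the Lie algebra of $K_1\otimes K_2=\{U_1\otimes U_2\}$. $sl_{\mathbb{C}}(N)$ is the set of all $A\in\mathbb{C}^{N\times N}$ with $\mathrm{tr}\,A=0$. *)

theory Defs
  imports "HOL-Analysis.Analysis"
begin

text \<open>Complex N x N matrices are modelled as complex^'n^'n (dimension = CARD('n)).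
  They form a real vector space; real Lie subalgebras are real subspaces closed
  under the matrix commutator.\<close>

definition commutator :: "complex^'n^'n \<Rightarrow> complex^'n^'n \<Rightarrow> complex^'n^'n" where
  "commutator A B = A ** B - B ** A"

definition real_lie_algebra :: "(complex^'n^'n) set \<Rightarrow> bool" where
  "real_lie_algebra L \<longleftrightarrow> subspace L \<and> (\<forall>A\<in>L. \<forall>B\<in>L. commutator A B \<in> L)"

definition abelian :: "(complex^'n^'n) set \<Rightarrow> bool" where
  "abelian L \<longleftrightarrow> (\<forall>A\<in>L. \<forall>B\<in>L. commutator A B = 0)"

definition torus_algebra :: "(complex^'n^'n) set \<Rightarrow> (complex^'n^'n) set \<Rightarrow> bool" where
  "torus_algebra t k \<longleftrightarrow> real_lie_algebra t \<and> t \<subseteq> k \<and> abelian t \<and>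
     (\<forall>s. real_lie_algebra s \<and> abelian s \<and> t \<subseteq> s \<and> s \<subseteq> k \<longrightarrow> s = t)"

text \<open>Kronecker product, with rows/columns indexed by pairs (lexicographic order is irrelevant).\<close>
definition kron :: "complex^'n^'n \<Rightarrow> complex^'m^'m \<Rightarrow> complex^('n \<times> 'm)^('n \<times> 'm)" where
  "kron A B = (\<chi> p. \<chi> q. A $ fst p $ fst q * B $ snd p $ snd q)"

definition hat_sum :: "(complex^'n^'n) set \<Rightarrow> (complex^'m^'m) set \<Rightarrow> (complex^('n \<times> 'm)^('n \<times> 'm)) set" where
  "hat_sum a1 a2 = {kron X (mat 1) + kron (mat 1) Y | X Y. X \<in> a1 \<and> Y \<in> a2}"

definition sl :: "(complex^'n^'n) set" where
  "sl = {A. trace A = 0}"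

end

theory Submission
  imports Defs
begin

text \<open>Commutators of Kronecker sums are computed componentwise:
  \<open>[X \<otimes> I + I \<otimes> Y, X' \<otimes> I + I \<otimes> Y'] = [X, X'] \<otimes> I + I \<otimes> [Y, Y']\<close>.
  Since \<open>X \<otimes> I = I \<otimes> Y\<close> only for equal scalar matrices \<open>X = Y = c I\<close>, and commutators
  are traceless, such a commutator vanishes iff both components do. Hence the centralizer
  of \<open>t\<^sub>1 \<oplus> t\<^sub>2\<close> inside \<open>k\<^sub>1 \<oplus> k\<^sub>2\<close> is the Kronecker sum of the centralizers, and
  maximality transfers from the factors to the sum, a torus algebra being exactly its
  own centralizer. Conversely, enlarging \<open>t\<^sub>1\<close> to an Abelian \<open>s\<close> enlarges
  \<open>t\<^sub>1 \<oplus> t\<^sub>2\<close> to \<open>s \<oplus> t\<^sub>2\<close>; for traceless factors the decomposition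
  \<open>X \<otimes> I + I \<otimes> Y\<close> is unique (in general \<open>c I \<otimes> I + I \<otimes> (-c I) = 0\<close>), so
  \<open>s \<oplus> t\<^sub>2 = t\<^sub>1 \<oplus> t\<^sub>2\<close> forces \<open>s = t\<^sub>1\<close>.\<close>

lemma matrix_add_rdistrib: "(A + B) ** C = A ** C + B ** C"
  by (simp add: vec_eq_iff matrix_matrix_mult_def distrib_right sum.distrib)

lemma trace_zero [simp]: "trace (0 :: 'a::semiring_1^'n^'n) = 0"
  by (simp add: trace_def)

lemma trace_mat: "trace (mat c :: 'a::semiring_1^'n^'n) = of_nat CARD('n) * c"
  by (simp add: trace_def mat_def)

lemma kron_nth [simp]: "kron A B $ p $ q = A $ fst p $ fst q * B $ snd p $ snd q"
  by (simp add: kron_def)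

lemma kron_mult: "kron A B ** kron C D = kron (A ** C) (B ** D)"
proof -
  have "(kron A B ** kron C D) $ p $ q = kron (A ** C) (B ** D) $ p $ q" for p q
  proof -
    have "(kron A B ** kron C D) $ p $ q =
        (\<Sum>a\<in>UNIV. \<Sum>b\<in>UNIV. (A$fst p$a * B$snd p$b) * (C$a$fst q * D$b$snd q))"
      by (simp add: matrix_matrix_mult_def sum.cartesian_product split_beta)
    also have "\<dots> = (\<Sum>a\<in>UNIV. A$fst p$a * C$a$fst q) * (\<Sum>b\<in>UNIV. B$snd p$b * D$b$snd q)"
      unfolding sum_product by (intro sum.cong refl) (simp add: mult_ac)
    finally show ?thesis
      by (simp add: matrix_matrix_mult_def)
  qed
  then show ?thesis
    by (simp add: vec_eq_iff)
qed

lemma kron_add_left: "kron (A + B) C = kron A C + kron B C"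
  and kron_add_right: "kron C (A + B) = kron C A + kron C B"
  and kron_diff_left: "kron (A - B) C = kron A C - kron B C"
  and kron_diff_right: "kron C (A - B) = kron C A - kron C B"
  and kron_scaleR_left: "kron (r *\<^sub>R A) C = r *\<^sub>R kron A C"
  and kron_scaleR_right: "kron C (r *\<^sub>R A) = r *\<^sub>R kron C A"
  by (simp_all add: vec_eq_iff algebra_simps)

lemma kron_mat1_eq_iff:
  "kron X (mat 1 :: complex^'m^'m) = kron (mat 1 :: complex^'n^'n) Y \<longleftrightarrow>
     (\<exists>c. X = mat c \<and> Y = mat c)"
proof
  assume eq: "kron X (mat 1 :: complex^'m^'m) = kron (mat 1 :: complex^'n^'n) Y"
  have entry: "X $ i $ j * (if k = l then 1 else 0) = (if i = j then 1 else 0) * Y $ k $ l" for i j k l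
    using arg_cong[OF eq, of "\<lambda>M. M $ (i, k) $ (j, l)"] by (simp add: mat_def)
  obtain i0 :: 'n and k0 :: 'm where True by blast
  define c where "c = X $ i0 $ i0"
  have "X $ i $ j = mat c $ i $ j" for i j
    using entry[of i j k0 k0] entry[of i i k0 k0] entry[of i0 i0 k0 k0] by (auto simp: mat_def c_def)
  moreover have "Y $ k $ l = mat c $ k $ l" for k l
    using entry[of i0 i0 k l] by (auto simp: mat_def c_def)
  ultimately show "\<exists>c. X = mat c \<and> Y = mat c"
    by (auto simp: vec_eq_iff)
qed (auto simp: vec_eq_iff mat_def)

definition kron_sum :: "complex^'n^'n \<Rightarrow> complex^'m^'m \<Rightarrow> complex^('n \<times> 'm)^('n \<times> 'm)" where
  "kron_sum X Y = kron X (mat 1) + kron (mat 1) Y"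

lemma kron_sum_0 [simp]: "kron_sum 0 0 = 0"
  by (simp add: kron_sum_def vec_eq_iff)

lemma kron_sum_eq_iff:
  "kron_sum X Y = kron_sum X' Y' \<longleftrightarrow> (\<exists>c. X - X' = mat c \<and> Y' - Y = mat c)"
proof -
  have "kron_sum X Y = kron_sum X' Y' \<longleftrightarrow> kron (X - X') (mat 1) = kron (mat 1) (Y' - Y)"
    by (auto simp: kron_sum_def kron_diff_left kron_diff_right algebra_simps)
  then show ?thesis
    by (simp add: kron_mat1_eq_iff)
qed

lemma kron_sum_inject:
  assumes "trace X = trace X' \<or> trace Y = trace Y'"
  shows "kron_sum X Y = kron_sum X' Y' \<longleftrightarrow> X = X' \<and> Y = Y'"
proof
  assume "kron_sum X Y = kron_sum X' Y'"
  then obtain c where c: "X - X' = mat c" "Y' - Y = mat c"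
    by (auto simp: kron_sum_eq_iff)
  have "trace (X - X') = 0 \<or> trace (Y' - Y) = 0"
    using assms by (auto simp: trace_sub)
  then have "c = 0"
    by (auto simp: c trace_mat)
  then show "X = X' \<and> Y = Y'"
    using c by simp
qed simp

lemma commutator_0_left [simp]: "commutator 0 A = 0"
  by (simp add: commutator_def)

lemma commutator_add_left: "commutator (A + B) C = commutator A C + commutator B C"
  by (simp add: commutator_def matrix_add_ldistrib matrix_add_rdistrib)

lemma commutator_scaleR_left: "commutator (r *\<^sub>R A) (C :: complex^'n^'n) = r *\<^sub>R commutator A C"
  by (simp add: commutator_def scalar_matrix_assoc matrix_scalar_ac scaleR_diff_right)

lemma commutator_self [simp]: "commutator A A = 0"
  by (simp add: commutator_def)

lemma commutator_eq_0_swap: "commutator A B = 0 \<Longrightarrow> commutator B A = 0"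
  by (simp add: commutator_def)

lemma trace_commutator: "trace (commutator A B) = 0"
  using trace_mul_sym[of A B] by (simp add: commutator_def trace_sub)

lemma commutator_kron_sum:
  "commutator (kron_sum X Y) (kron_sum X' Y') = kron_sum (commutator X X') (commutator Y Y')"
  by (simp add: commutator_def kron_sum_def matrix_add_ldistrib matrix_add_rdistrib kron_mult
      kron_diff_left kron_diff_right algebra_simps)

lemma commutator_kron_sum_eq_0_iff:
  "commutator (kron_sum X Y) (kron_sum X' Y') = 0 \<longleftrightarrow> commutator X X' = 0 \<and> commutator Y Y' = 0"
  using kron_sum_inject[of "commutator X X'" 0 "commutator Y Y'" 0]
  by (simp add: commutator_kron_sum trace_commutator)

definition centralizer :: "(complex^'n^'n) set \<Rightarrow> (complex^'n^'n) set" where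
  "centralizer S = {A. \<forall>B\<in>S. commutator A B = 0}"

lemma centralizer_antimono: "S \<subseteq> T \<Longrightarrow> centralizer T \<subseteq> centralizer S"
  by (auto simp: centralizer_def)

lemma abelian_iff_subset_centralizer: "abelian S \<longleftrightarrow> S \<subseteq> centralizer S"
  by (auto simp: abelian_def centralizer_def)

lemma subspace_centralizer: "subspace (centralizer S)"
  by (auto simp: subspace_def centralizer_def commutator_add_left commutator_scaleR_left)

lemma centralizer_span [simp]: "centralizer (span S) = centralizer S"
proof
  show "centralizer S \<subseteq> centralizer (span S)"
  proof
    fix A assume "A \<in> centralizer S"
    then have "S \<subseteq> centralizer {A}"
      unfolding centralizer_def by (blast dest: commutator_eq_0_swap)
    then have "span S \<subseteq> centralizer {A}"
      by (rule span_minimal[OF _ subspace_centralizer])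
    then show "A \<in> centralizer (span S)"
      unfolding centralizer_def by (blast dest: commutator_eq_0_swap)
  qed
qed (intro centralizer_antimono span_superset)

lemma abelian_span: "abelian S \<Longrightarrow> abelian (span S)"
  unfolding abelian_iff_subset_centralizer centralizer_span
  by (rule span_minimal[OF _ subspace_centralizer])

lemma real_lie_algebra_if_abelian: "subspace L \<Longrightarrow> abelian L \<Longrightarrow> real_lie_algebra L"
  by (simp add: real_lie_algebra_def abelian_def subspace_0)

lemma torus_algebra_centralizer:
  assumes t: "torus_algebra t k" and k: "subspace k"
  shows "k \<inter> centralizer t = t"
proof
  have tk: "t \<subseteq> k" and ab: "abelian t"
    and max: "\<And>s. real_lie_algebra s \<Longrightarrow> abelian s \<Longrightarrow> t \<subseteq> s \<Longrightarrow> s \<subseteq> k \<Longrightarrow> s = t"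
    using t by (auto simp: torus_algebra_def)
  then show "t \<subseteq> k \<inter> centralizer t"
    by (simp add: abelian_iff_subset_centralizer)
  show "k \<inter> centralizer t \<subseteq> t"
  proof
    fix X assume X: "X \<in> k \<inter> centralizer t"
    let ?s = "span (insert X t)"
    have "commutator A B = 0" if "A \<in> insert X t" "B \<in> insert X t" for A B
      using that X ab commutator_eq_0_swap[of X]
      by (elim insertE) (auto simp: centralizer_def abelian_def)
    then have "insert X t \<subseteq> centralizer (insert X t)"
      by (auto simp: centralizer_def)
    then have "abelian ?s"
      unfolding abelian_iff_subset_centralizer[symmetric] by (rule abelian_span)
    moreover have "?s \<subseteq> k"
      using X tk k by (intro span_minimal) auto
    ultimately have "?s = t"
      by (intro max real_lie_algebra_if_abelian subspace_span) (auto intro: span_base)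
    then show "X \<in> t"
      using span_base[of X "insert X t"] by simp
  qed
qed

lemma mem_hat_sum_iff: "Z \<in> hat_sum a b \<longleftrightarrow> (\<exists>X\<in>a. \<exists>Y\<in>b. Z = kron_sum X Y)"
  by (auto simp: hat_sum_def kron_sum_def)

lemma kron_sum_in_hat_sum: "X \<in> a \<Longrightarrow> Y \<in> b \<Longrightarrow> kron_sum X Y \<in> hat_sum a b"
  by (auto simp: mem_hat_sum_iff)

lemma ball_hat_sum_iff: "(\<forall>Z\<in>hat_sum a b. P Z) \<longleftrightarrow> (\<forall>X\<in>a. \<forall>Y\<in>b. P (kron_sum X Y))"
  by (metis kron_sum_in_hat_sum mem_hat_sum_iff)

lemma hat_sum_mono: "a \<subseteq> a' \<Longrightarrow> b \<subseteq> b' \<Longrightarrow> hat_sum a b \<subseteq> hat_sum a' b'"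
  by (auto simp: hat_sum_def)

lemma subspace_hat_sum:
  assumes "subspace a" "subspace b"
  shows "subspace (hat_sum a b)"
proof -
  have "linear (\<lambda>X. kron X (mat 1))" "linear (\<lambda>Y. kron (mat 1) Y)"
    by (auto intro!: linearI simp: kron_add_left kron_add_right kron_scaleR_left kron_scaleR_right)
  then have "subspace {A + B |A B. A \<in> (\<lambda>X. kron X (mat 1)) ` a \<and> B \<in> (\<lambda>Y. kron (mat 1) Y) ` b}"
    using assms by (intro subspace_sums linear_subspace_image)
  also have "{A + B |A B. A \<in> (\<lambda>X. kron X (mat 1)) ` a \<and> B \<in> (\<lambda>Y. kron (mat 1) Y) ` b} = hat_sum a b"
    by (auto simp: hat_sum_def)
  finally show ?thesis .
qed

lemma real_lie_algebra_hat_sum: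
  assumes a: "real_lie_algebra a" and b: "real_lie_algebra b"
  shows "real_lie_algebra (hat_sum a b)"
proof -
  have "commutator A B \<in> hat_sum a b" if AB: "A \<in> hat_sum a b" "B \<in> hat_sum a b" for A B
  proof -
    obtain X Y X' Y' where "X \<in> a" "Y \<in> b" "X' \<in> a" "Y' \<in> b"
      and "A = kron_sum X Y" "B = kron_sum X' Y'"
      using AB unfolding mem_hat_sum_iff by blast
    then show ?thesis
      using a b unfolding real_lie_algebra_def by (simp add: commutator_kron_sum kron_sum_in_hat_sum)
  qed
  then show ?thesis
    using a b by (simp add: real_lie_algebra_def subspace_hat_sum)
qed

lemma kron_sum_mem_centralizer_hat_sum_iff:
  assumes "a \<noteq> {}" "b \<noteq> {}"
  shows "kron_sum X Y \<in> centralizer (hat_sum a b) \<longleftrightarrow> X \<in> centralizer a \<and> Y \<in> centralizer b"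
proof -
  have "kron_sum X Y \<in> centralizer (hat_sum a b) \<longleftrightarrow>
      (\<forall>T\<in>a. \<forall>U\<in>b. commutator X T = 0 \<and> commutator Y U = 0)"
    by (simp add: centralizer_def ball_hat_sum_iff commutator_kron_sum_eq_0_iff)
  also have "\<dots> \<longleftrightarrow> X \<in> centralizer a \<and> Y \<in> centralizer b"
    using assms unfolding centralizer_def by blast
  finally show ?thesis .
qed

lemma abelian_hat_sum_iff:
  assumes "a \<noteq> {}" "b \<noteq> {}"
  shows "abelian (hat_sum a b) \<longleftrightarrow> abelian a \<and> abelian b"
proof -
  have "abelian (hat_sum a b) \<longleftrightarrow>
      (\<forall>X\<in>a. \<forall>Y\<in>b. X \<in> centralizer a \<and> Y \<in> centralizer b)"
    by (simp add: abelian_iff_subset_centralizer subset_eq ball_hat_sum_iff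
        kron_sum_mem_centralizer_hat_sum_iff[OF assms])
  also have "\<dots> \<longleftrightarrow> abelian a \<and> abelian b"
    using assms by (auto simp: abelian_iff_subset_centralizer)
  finally show ?thesis .
qed

lemma hat_sum_subset_cancel_left:
  assumes "hat_sum a b \<subseteq> hat_sum a' b'" "0 \<in> b" "b' \<subseteq> sl"
  shows "a \<subseteq> a'"
proof
  fix X assume "X \<in> a"
  then obtain X' Y' where "X' \<in> a'" "Y' \<in> b'" "kron_sum X 0 = kron_sum X' Y'"
    using assms(1,2) kron_sum_in_hat_sum by (force simp: mem_hat_sum_iff)
  moreover have "trace Y' = 0"
    using assms(3) \<open>Y' \<in> b'\<close> by (auto simp: sl_def)
  ultimately show "X \<in> a'"
    using kron_sum_inject[of X X' 0 Y'] by simp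
qed

lemma hat_sum_subset_cancel_right:
  assumes "hat_sum a b \<subseteq> hat_sum a' b'" "0 \<in> a" "a' \<subseteq> sl"
  shows "b \<subseteq> b'"
proof
  fix Y assume "Y \<in> b"
  then obtain X' Y' where "X' \<in> a'" "Y' \<in> b'" "kron_sum 0 Y = kron_sum X' Y'"
    using assms(1,2) kron_sum_in_hat_sum by (force simp: mem_hat_sum_iff)
  moreover have "trace X' = 0"
    using assms(3) \<open>X' \<in> a'\<close> by (auto simp: sl_def)
  ultimately show "Y \<in> b'"
    using kron_sum_inject[of 0 X' Y Y'] by simp
qed

lemma torus_algebra_hat_sum:
  assumes k1: "real_lie_algebra k1" and k2: "real_lie_algebra k2"
    and t1: "torus_algebra t1 k1" and t2: "torus_algebra t2 k2"
  shows "torus_algebra (hat_sum t1 t2) (hat_sum k1 k2)"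
proof -
  have lie: "real_lie_algebra t1" "real_lie_algebra t2" and "t1 \<subseteq> k1" "t2 \<subseteq> k2"
    and ab: "abelian t1" "abelian t2"
    using t1 t2 by (auto simp: torus_algebra_def)
  have ne: "t1 \<noteq> {}" "t2 \<noteq> {}"
    using lie by (auto simp: real_lie_algebra_def dest: subspace_0)
  have cent: "k1 \<inter> centralizer t1 = t1" "k2 \<inter> centralizer t2 = t2"
    using k1 k2 by (auto simp: real_lie_algebra_def intro!: torus_algebra_centralizer t1 t2)
  have "s \<subseteq> hat_sum t1 t2"
    if s: "abelian s" "hat_sum t1 t2 \<subseteq> s" "s \<subseteq> hat_sum k1 k2" for s
  proof
    fix Z assume "Z \<in> s"
    then have "Z \<in> hat_sum k1 k2"
      using s(3) by blast
    then obtain X Y where Z: "Z = kron_sum X Y" "X \<in> k1" "Y \<in> k2"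
      by (auto simp: mem_hat_sum_iff)
    have "Z \<in> centralizer (hat_sum t1 t2)"
      using \<open>Z \<in> s\<close> s(1) centralizer_antimono[OF s(2)]
      unfolding abelian_iff_subset_centralizer by blast
    then have "X \<in> t1" "Y \<in> t2"
      using Z cent kron_sum_mem_centralizer_hat_sum_iff[OF ne] by auto
    then show "Z \<in> hat_sum t1 t2"
      by (simp add: Z kron_sum_in_hat_sum)
  qed
  then show ?thesis
    using lie ab ne \<open>t1 \<subseteq> k1\<close> \<open>t2 \<subseteq> k2\<close>
    by (auto simp: torus_algebra_def real_lie_algebra_hat_sum abelian_hat_sum_iff hat_sum_mono)
qed

lemma torus_algebra_of_hat_sum:
  assumes sl: "k1 \<subseteq> sl" "k2 \<subseteq> sl"
    and lie: "real_lie_algebra t1" "real_lie_algebra t2" and sub: "t1 \<subseteq> k1" "t2 \<subseteq> k2"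
    and T: "torus_algebra (hat_sum t1 t2) (hat_sum k1 k2)"
  shows "torus_algebra t1 k1 \<and> torus_algebra t2 k2"
proof -
  have z: "0 \<in> t1" "0 \<in> t2"
    using lie by (auto simp: real_lie_algebra_def subspace_0)
  have ab: "abelian t1" "abelian t2"
    using T z abelian_hat_sum_iff[of t1 t2] by (auto simp: torus_algebra_def)
  have max: "\<And>s. real_lie_algebra s \<Longrightarrow> abelian s \<Longrightarrow> hat_sum t1 t2 \<subseteq> s \<Longrightarrow>
      s \<subseteq> hat_sum k1 k2 \<Longrightarrow> s = hat_sum t1 t2"
    using T by (auto simp: torus_algebra_def)
  have "s \<subseteq> t1" if "real_lie_algebra s" "abelian s" "t1 \<subseteq> s" "s \<subseteq> k1" for s
  proof -
    have "abelian (hat_sum s t2)"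
      using that(2,3) ab z by (subst abelian_hat_sum_iff) auto
    then have "hat_sum s t2 = hat_sum t1 t2"
      using that lie sub by (intro max real_lie_algebra_hat_sum hat_sum_mono) auto
    then show ?thesis
      using hat_sum_subset_cancel_left[of s t2 t1 t2] z sub sl by auto
  qed
  moreover have "s \<subseteq> t2" if "real_lie_algebra s" "abelian s" "t2 \<subseteq> s" "s \<subseteq> k2" for s
  proof -
    have "abelian (hat_sum t1 s)"
      using that(2,3) ab z by (subst abelian_hat_sum_iff) auto
    then have "hat_sum t1 s = hat_sum t1 t2"
      using that lie sub by (intro max real_lie_algebra_hat_sum hat_sum_mono) auto
    then show ?thesis
      using hat_sum_subset_cancel_right[of t1 s t1 t2] z sub sl by auto
  qed
  ultimately show ?thesis
    using lie sub ab by (auto simp: torus_algebra_def)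
qed

theorem lemma3p2:
  fixes k1 :: "(complex^'n^'n) set" and k2 :: "(complex^'m^'m) set"
  assumes "real_lie_algebra k1" and "real_lie_algebra k2"
  shows "(\<forall>t1 t2. torus_algebra t1 k1 \<and> torus_algebra t2 k2 \<longrightarrow>
            torus_algebra (hat_sum t1 t2) (hat_sum k1 k2))
       \<and> (k1 \<subseteq> sl \<and> k2 \<subseteq> sl \<longrightarrow>
            (\<forall>t1 t2. real_lie_algebra t1 \<and> t1 \<subseteq> k1 \<and> real_lie_algebra t2 \<and> t2 \<subseteq> k2 \<and>
               torus_algebra (hat_sum t1 t2) (hat_sum k1 k2) \<longrightarrow>
               torus_algebra t1 k1 \<and> torus_algebra t2 k2))"
  using torus_algebra_hat_sum[OF assms] torus_algebra_of_hat_sum by blast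

end
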